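(* Let $B\ge 1$, let $D$ be any distribution on $\mathscr{X}\times\{\pm1\}$, let $\rho\in[0,1/2)$, and let $s\in\mathscr{F}_B=\{s:\mathscr{X}\to[-B,B]\}$ be any (measurable) scorer. Then, with $\ell=\ell^{\mathrm{unh}}$, $$\mathrm{regret}^{D}_{01}(s)\;\le\;\mathrm{regret}^{D,\mathscr{F}_B}_{\ell}(s)\;=\;\frac{1}{1-2\rho}\cdot\mathrm{regret}^{\mathrm{SLN}(D,\rho),\mathscr{F}_B}_{\ell}(s).$$
   Context: The unhinged loss is $\ell^{\mathrm{unh}}(y,v)=1-yv$ for $y\in\{\pm1\}$, $v\in\mathbb{R}$. For a loss $\ell$, distribution $D$ and function class $\mathscr{F}$, the $\ell$-risk is $\mathbb{L}^D_\ell(s)=\mathbb{E}_{(\mathsf{X},\mathsf{Y})\sim D}[\ell(\mathsf{Y},s(\mathsf{X}))]$ and the restricted regret is $\mathrm{regret}^{D,\mathscr{F}}_\ell(s)=\mathbb{L}^D_\ell(s)-\inf_{t\in\mathscr{F}}\mathbb{L}^D_\ell(t)$. The zero-one loss is $\ell^{01}(y,v)=\mathbb{1}[yv<0]+\tfrac12\mathbb{1}[v=0]$ and $\mathrm{regret}^D_{01}(s)=\mathrm{regret}^{D,\mathbb{R}^{\mathscr{X}}}_{\ell^{01}}(s)$ (infimum over all measurable scorers). For $\rho\in[0,1/2)$, $\mathrm{SLN}(D,\rho)$ is the distribution with the same marginal on $\mathscr{X}$ as $D$ in which each label of $D$ is independently flipped with probability $\rho$; its class-probability function is $\bar\eta(x)=(1-2\rho)\eta(x)+\rho$.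 *)

theory Defs
  imports "HOL-Probability.Probability"
begin

text \<open>Instances live on a measurable space M; a distribution D on X x {+-1} is a
  probability measure with sets D = sets (M times count_space {-1,1}).\<close>

definition label_space :: "real measure" where
  "label_space = count_space {-1, 1}"

definition unhinged_loss :: "real \<Rightarrow> real \<Rightarrow> real" where
  "unhinged_loss y v = 1 - y * v"

definition zero_one_loss :: "real \<Rightarrow> real \<Rightarrow> real" where
  "zero_one_loss y v = (if y * v < 0 then 1 else 0) + (if v = 0 then 1/2 else 0)"

definition risk :: "('a \<times> real) measure \<Rightarrow> (real \<Rightarrow> real \<Rightarrow> real) \<Rightarrow> ('a \<Rightarrow> real) \<Rightarrow> real" where
  "risk D l s = (\<integral>z. l (snd z) (s (fst z)) \<partial>D)"

definition regret :: "('a \<times> real) measure \<Rightarrow> ('a \<Rightarrow> real) set \<Rightarrow> (real \<Rightarrow> real \<Rightarrow> real) \<Rightarrow> ('a \<Rightarrow> real) \<Rightarrow> real" where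
  "regret D F l s = risk D l s - (INF t\<in>F. risk D l t)"

definition bounded_scorers :: "'a measure \<Rightarrow> real \<Rightarrow> ('a \<Rightarrow> real) set" where
  "bounded_scorers M B = {s \<in> borel_measurable M. \<forall>x\<in>space M. -B \<le> s x \<and> s x \<le> B}"

definition regret01 :: "'a measure \<Rightarrow> ('a \<times> real) measure \<Rightarrow> ('a \<Rightarrow> real) \<Rightarrow> real" where
  "regret01 M D s = regret D (borel_measurable M) zero_one_loss s"

definition SLN :: "'a measure \<Rightarrow> ('a \<times> real) measure \<Rightarrow> real \<Rightarrow> ('a \<times> real) measure" where
  "SLN M D \<rho> = distr (D \<Otimes>\<^sub>M measure_pmf (bernoulli_pmf \<rho>)) (M \<Otimes>\<^sub>M label_space)
      (\<lambda>((x, y), b). (x, if b then - y else y))"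

end

theory Submission
  imports Defs
begin

text \<open>Flipping a label y with probability \<rho> turns the unhinged loss 1 - y v into its
  expectation 2\<rho> + (1 - 2\<rho>)(1 - y v), so every SLN risk is a positive affine function of the
  clean risk and regrets scale by 1 - 2\<rho>. For the 0-1 bound, on labels y = \<plusminus>1 the 0-1 loss
  is affine in y, zero_one_loss y v = 1/2 + y (zero_one_loss 1 v - 1/2), just like the unhinged
  loss; hence the 0-1 excess risk of s over any scorer t equals the unhinged excess risk of s
  over u = s + zero_one_loss 1 \<circ> s - zero_one_loss 1 \<circ> t, and B \<ge> 1 ensures u \<in> F_B.\<close>

lemma cINF_affine:
  fixes R :: "'b \<Rightarrow> real"
  assumes "F \<noteq> {}" "bdd_below (R ` F)" "c > 0"
  shows "(INF t\<in>F. c * R t + d) = c * (INF t\<in>F. R t) + d"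
proof (rule antisym)
  show "c * (INF t\<in>F. R t) + d \<le> (INF t\<in>F. c * R t + d)"
    using assms by (intro cINF_greatest) (auto intro!: cINF_lower)
  have "((INF t\<in>F. c * R t + d) - d) / c \<le> R t" if "t \<in> F" for t
  proof -
    have "bdd_below ((\<lambda>t. c * R t + d) ` F)"
    proof -
      obtain m where "\<forall>t\<in>F. m \<le> R t" using assms(2) by (auto simp: bdd_below_def)
      then show ?thesis
        using assms(3) by (intro bdd_belowI2[where m="c * m + d"]) simp
    qed
    then have "(INF t\<in>F. c * R t + d) \<le> c * R t + d"
      using that by (intro cINF_lower) auto
    then show ?thesis
      using assms(3) by (simp add: field_simps)
  qed
  then have "((INF t\<in>F. c * R t + d) - d) / c \<le> (INF t\<in>F. R t)"
    using assms(1) by (intro cINF_greatest) auto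
  then show "(INF t\<in>F. c * R t + d) \<le> c * (INF t\<in>F. R t) + d"
    using assms(3) by (simp add: field_simps)
qed

lemma regret_eq_if_risk_affine:
  assumes "s \<in> F" "bdd_below (risk D l ` F)" "c > 0"
    and "\<And>t. t \<in> F \<Longrightarrow> risk D' l t = c * risk D l t + d"
  shows "regret D' F l s = c * regret D F l s"
proof -
  have "(INF t\<in>F. risk D' l t) = (INF t\<in>F. c * risk D l t + d)"
    using assms(4) by (rule INF_cong[OF refl])
  also have "\<dots> = c * (INF t\<in>F. risk D l t) + d"
    using assms(1-3) by (intro cINF_affine) auto
  finally show ?thesis
    unfolding regret_def using assms(1,4) by (simp add: algebra_simps)
qed

lemma space_label_space: "space label_space = {-1, 1}"
  by (simp add: label_space_def)

lemma uminus_measurable_label_space[measurable]: "uminus \<in> measurable label_space label_space"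
  unfolding label_space_def by (auto simp: measurable_count_space_eq2)

lemma borel_measurable_label_space[measurable]: "(\<lambda>y. y) \<in> borel_measurable label_space"
  unfolding label_space_def by simp

lemma measurable_flip_label:
  "(\<lambda>((x, y), b). (x, if b then - y else y))
     \<in> measurable ((M \<Otimes>\<^sub>M label_space) \<Otimes>\<^sub>M measure_pmf p) (M \<Otimes>\<^sub>M label_space)"
proof -
  have "Measurable.pred ((M \<Otimes>\<^sub>M label_space) \<Otimes>\<^sub>M measure_pmf p) snd"
    by (rule measurable_compose[OF measurable_snd]) simp
  then show ?thesis
    unfolding case_prod_beta by measurable
qed

lemma zero_one_loss_neg_label: "zero_one_loss (-1) v = 1 - zero_one_loss 1 v"
  unfolding zero_one_loss_def by auto

lemma zero_one_loss_measurable[measurable]: "zero_one_loss y \<in> borel_measurable borel"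
  unfolding zero_one_loss_def by measurable

lemma zero_one_loss_diff_eq_unhinged_loss_diff:
  assumes "y = 1 \<or> y = -1"
  shows "zero_one_loss y v - zero_one_loss y w
       = unhinged_loss y v - unhinged_loss y (v + zero_one_loss 1 v - zero_one_loss 1 w)"
  using assms unfolding unhinged_loss_def by (auto simp: zero_one_loss_neg_label)

lemma abs_shift_zero_one_loss_le:
  assumes "\<bar>v\<bar> \<le> B" "1 \<le> B"
  shows "\<bar>v + zero_one_loss 1 v - zero_one_loss 1 w\<bar> \<le> B"
  using assms unfolding zero_one_loss_def by (auto split: if_splits)

lemma expectation_flipped_unhinged_loss:
  assumes "0 \<le> \<rho>" "\<rho> \<le> 1"
  shows "(\<integral>b. unhinged_loss (if b then - y else y) v \<partial>bernoulli_pmf \<rho>)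
       = 2 * \<rho> + (1 - 2 * \<rho>) * unhinged_loss y v"
  using assms unfolding unhinged_loss_def by (simp add: algebra_simps)

lemma bounded_scorersD:
  "t \<in> bounded_scorers M B \<Longrightarrow> x \<in> space M \<Longrightarrow> \<bar>t x\<bar> \<le> B"
  "t \<in> bounded_scorers M B \<Longrightarrow> t \<in> borel_measurable M"
  unfolding bounded_scorers_def by auto

lemma abs_unhinged_loss_le:
  assumes "z \<in> space (M \<Otimes>\<^sub>M label_space)" "t \<in> bounded_scorers M B"
  shows "\<bar>unhinged_loss (snd z) (t (fst z))\<bar> \<le> 1 + B"
  using assms bounded_scorersD(1)[of t M B "fst z"]
  by (auto simp: space_pair_measure space_label_space unhinged_loss_def)

locale labelled_prob_space = prob_space D
  for M :: "'a measure" and D :: "('a \<times> real) measure" +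
  assumes sets_D: "sets D = sets (M \<Otimes>\<^sub>M label_space)"
begin

lemma space_D: "space D = space (M \<Otimes>\<^sub>M label_space)"
  by (rule sets_eq_imp_space_eq[OF sets_D])

lemma label_cases_D: "z \<in> space D \<Longrightarrow> snd z = 1 \<or> snd z = -1"
  by (auto simp: space_D space_pair_measure space_label_space)

lemma measurable_D_iff: "measurable D N = measurable (M \<Otimes>\<^sub>M label_space) N"
  by (rule measurable_cong_sets[OF sets_D refl])

lemma measurable_fst_D[measurable]: "fst \<in> measurable D M"
  unfolding measurable_D_iff by simp

lemma measurable_label_D[measurable]: "snd \<in> borel_measurable D"
  unfolding measurable_D_iff by measurable

lemma integrable_bounded:
  fixes f :: "'a \<times> real \<Rightarrow> real"
  assumes "f \<in> borel_measurable D" "\<And>z. z \<in> space D \<Longrightarrow> \<bar>f z\<bar> \<le> C"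
  shows "integrable D f"
  using assms by (intro integrable_const_bound[where B=C]) auto

lemma integrable_unhinged_loss:
  assumes "t \<in> bounded_scorers M B"
  shows "integrable D (\<lambda>z. unhinged_loss (snd z) (t (fst z)))"
proof (rule integrable_bounded)
  show "(\<lambda>z. unhinged_loss (snd z) (t (fst z))) \<in> borel_measurable D"
    using bounded_scorersD(2)[OF assms] unfolding unhinged_loss_def by measurable
qed (use abs_unhinged_loss_le[OF _ assms] space_D in auto)

lemma integrable_zero_one_loss:
  assumes [measurable]: "t \<in> borel_measurable M"
  shows "integrable D (\<lambda>z. zero_one_loss (snd z) (t (fst z)))"
proof (rule integrable_bounded[where C="3/2"])
  show "(\<lambda>z. zero_one_loss (snd z) (t (fst z))) \<in> borel_measurable D"
    unfolding zero_one_loss_def by measurable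
qed (simp add: zero_one_loss_def)

lemma bdd_below_risk_unhinged_loss:
  "bdd_below (risk D unhinged_loss ` bounded_scorers M B)"
proof (rule bdd_belowI2)
  fix t assume t: "t \<in> bounded_scorers M B"
  have "(\<integral>z. - (1 + B) \<partial>D) \<le> risk D unhinged_loss t"
    unfolding risk_def using abs_unhinged_loss_le[OF _ t] space_D
    by (intro integral_mono integrable_unhinged_loss[OF t]) (force simp: abs_le_iff)+
  then show "- (1 + B) \<le> risk D unhinged_loss t"
    by (simp add: prob_space)
qed

lemma integral_SLN:
  fixes f :: "'a \<times> real \<Rightarrow> real"
  assumes f: "f \<in> borel_measurable (M \<Otimes>\<^sub>M label_space)"
    and bound: "\<And>z. z \<in> space (M \<Otimes>\<^sub>M label_space) \<Longrightarrow> \<bar>f z\<bar> \<le> C"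
  shows "(\<integral>z. f z \<partial>SLN M D \<rho>)
       = (\<integral>z. (\<integral>b. f (fst z, if b then - snd z else snd z) \<partial>bernoulli_pmf \<rho>) \<partial>D)"
proof -
  let ?P = "D \<Otimes>\<^sub>M measure_pmf (bernoulli_pmf \<rho>)"
  let ?flip = "\<lambda>((x, y), b). (x, if b then - y else y)"
  interpret P: pair_prob_space D "measure_pmf (bernoulli_pmf \<rho>)"
    by (intro pair_prob_space.intro pair_sigma_finite.intro prob_space_imp_sigma_finite
        prob_space_axioms prob_space_measure_pmf)
  have flip: "?flip \<in> measurable ?P (M \<Otimes>\<^sub>M label_space)"
    by (subst measurable_cong_sets[OF sets_pair_measure_cong[OF sets_D refl] refl])
       (rule measurable_flip_label)
  have "integrable ?P (\<lambda>w. f (?flip w))"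
  proof (rule P.P.integrable_const_bound[where B=C])
    show "AE w in ?P. norm (f (?flip w)) \<le> C"
      using bound measurable_space[OF flip] by auto
  qed (use flip f in measurable)
  then have "(\<integral>w. f (?flip w) \<partial>?P)
      = (\<integral>z. (\<integral>b. f (?flip (z, b)) \<partial>bernoulli_pmf \<rho>) \<partial>D)"
    by (rule P.integral_fst'[symmetric])
  then show ?thesis
    unfolding SLN_def integral_distr[OF flip f] by (simp add: case_prod_beta)
qed

lemma risk_SLN_unhinged_loss:
  assumes "0 \<le> \<rho>" "\<rho> \<le> 1" and t: "t \<in> bounded_scorers M B"
  shows "risk (SLN M D \<rho>) unhinged_loss t = (1 - 2 * \<rho>) * risk D unhinged_loss t + 2 * \<rho>"
proof -
  have "(\<lambda>z. unhinged_loss (snd z) (t (fst z))) \<in> borel_measurable (M \<Otimes>\<^sub>M label_space)"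
    using bounded_scorersD(2)[OF t] unfolding unhinged_loss_def by measurable
  then have "risk (SLN M D \<rho>) unhinged_loss t
      = (\<integral>z. (\<integral>b. unhinged_loss (if b then - snd z else snd z) (t (fst z)) \<partial>bernoulli_pmf \<rho>) \<partial>D)"
    using integral_SLN[OF _ abs_unhinged_loss_le[OF _ t]] unfolding risk_def by simp
  also have "\<dots> = (\<integral>z. 2 * \<rho> + (1 - 2 * \<rho>) * unhinged_loss (snd z) (t (fst z)) \<partial>D)"
    by (intro Bochner_Integration.integral_cong refl expectation_flipped_unhinged_loss assms(1,2))
  also have "\<dots> = (1 - 2 * \<rho>) * risk D unhinged_loss t + 2 * \<rho>"
    unfolding risk_def using integrable_unhinged_loss[OF t] by (simp add: prob_space)
  finally show ?thesis .
qed

lemma regret_SLN_unhinged_loss: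
  assumes "0 \<le> \<rho>" "\<rho> < 1/2" "s \<in> bounded_scorers M B"
  shows "regret (SLN M D \<rho>) (bounded_scorers M B) unhinged_loss s
       = (1 - 2 * \<rho>) * regret D (bounded_scorers M B) unhinged_loss s"
  using assms
  by (intro regret_eq_if_risk_affine[where d="2 * \<rho>"] bdd_below_risk_unhinged_loss
      risk_SLN_unhinged_loss) auto

lemma regret01_le_regret_unhinged_loss:
  assumes "1 \<le> B" and s: "s \<in> bounded_scorers M B"
  shows "regret01 M D s \<le> regret D (bounded_scorers M B) unhinged_loss s"
proof -
  have s_meas[measurable]: "s \<in> borel_measurable M"
    by (rule bounded_scorersD(2)[OF s])
  have "risk D zero_one_loss s - risk D zero_one_loss t
      \<le> regret D (bounded_scorers M B) unhinged_loss s"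
    if t_meas[measurable]: "t \<in> borel_measurable M" for t
  proof -
    define u where "u x = s x + zero_one_loss 1 (s x) - zero_one_loss 1 (t x)" for x
    have u: "u \<in> bounded_scorers M B"
      unfolding bounded_scorers_def
    proof (intro CollectI conjI ballI)
      show "u \<in> borel_measurable M"
        unfolding u_def by measurable
      show "- B \<le> u x" "u x \<le> B" if "x \<in> space M" for x
        using abs_shift_zero_one_loss_le[OF bounded_scorersD(1)[OF s that] assms(1), of "t x"]
        unfolding u_def by (auto simp: abs_le_iff)
    qed
    have "risk D zero_one_loss s - risk D zero_one_loss t
        = (\<integral>z. zero_one_loss (snd z) (s (fst z)) - zero_one_loss (snd z) (t (fst z)) \<partial>D)"
      unfolding risk_def using integrable_zero_one_loss s_meas t_meas by simp
    also have "\<dots> = (\<integral>z. unhinged_loss (snd z) (s (fst z)) - unhinged_loss (snd z) (u (fst z)) \<partial>D)"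
      unfolding u_def
      by (intro Bochner_Integration.integral_cong refl zero_one_loss_diff_eq_unhinged_loss_diff
          label_cases_D)
    also have "\<dots> = risk D unhinged_loss s - risk D unhinged_loss u"
      unfolding risk_def using integrable_unhinged_loss s u by simp
    also have "\<dots> \<le> regret D (bounded_scorers M B) unhinged_loss s"
      unfolding regret_def using cINF_lower[OF bdd_below_risk_unhinged_loss u] by simp
    finally show ?thesis .
  qed
  then have "risk D zero_one_loss s - regret D (bounded_scorers M B) unhinged_loss s
      \<le> (INF t\<in>borel_measurable M. risk D zero_one_loss t)"
    using s_meas by (intro cINF_greatest) (fastforce simp: algebra_simps)+
  then show ?thesis
    unfolding regret01_def regret_def[of D "borel_measurable M"] by simp
qed

end

theorem mainTheorem4:
  fixes M :: "'a measure" and D :: "('a \<times> real) measure"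
    and \<rho> B :: real and s :: "'a \<Rightarrow> real"
  assumes "prob_space D"
    and "sets D = sets (M \<Otimes>\<^sub>M label_space)"
    and "B \<ge> 1"
    and "0 \<le> \<rho>" and "\<rho> < 1/2"
    and "s \<in> bounded_scorers M B"
  shows "regret01 M D s \<le> regret D (bounded_scorers M B) unhinged_loss s
       \<and> regret D (bounded_scorers M B) unhinged_loss s
           = 1 / (1 - 2 * \<rho>) * regret (SLN M D \<rho>) (bounded_scorers M B) unhinged_loss s"
proof -
  interpret labelled_prob_space M D
    using assms(1,2) by (intro labelled_prob_space.intro labelled_prob_space_axioms.intro)
  show ?thesis
    using regret01_le_regret_unhinged_loss[OF assms(3,6)]
      regret_SLN_unhinged_loss[OF assms(4,5,6)] assms(5)
    by simp
qed

end
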